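(* For every $n\ge1$, \[G_n(x)=(n+(n-1)x)H_n(x)+(x+x^2)H_n'(x).\]
   Context: The polynomials are defined by $G_1=H_1=1$, $G_{n+1}(x)=(2n+nx)G_n(x)+(1+x)^2G_n'(x)$ and $H_{n+1}(x)=(2n-1+(n-1)x)H_n(x)+(1+x)^2H_n'(x)$. *)

theory Defs
  imports "HOL-Computational_Algebra.Polynomial"
begin

text \<open>G_1 = 1, G_{n+1}(x) = (2n + n x) G_n(x) + (1+x)^2 G_n'(x), for n \<ge> 1.
  Index 0 is unused (set to 0).\<close>
fun G :: "nat \<Rightarrow> int poly" where
  "G 0 = 0"
| "G (Suc 0) = 1"
| "G (Suc (Suc k)) =
     [: 2 * int (Suc k), int (Suc k) :] * G (Suc k) + [:1, 1:]^2 * pderiv (G (Suc k))"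

fun H :: "nat \<Rightarrow> int poly" where
  "H 0 = 0"
| "H (Suc 0) = 1"
| "H (Suc (Suc k)) =
     [: 2 * int (Suc k) - 1, int (Suc k) - 1 :] * H (Suc k) + [:1, 1:]^2 * pderiv (H (Suc k))"

end

theory Submission
  imports Defs
begin

text \<open>
  The recurrences are \<open>G\<^sub>n\<^sub>+\<^sub>1 = A\<^sub>n G\<^sub>n\<close> and \<open>H\<^sub>n\<^sub>+\<^sub>1 = B\<^sub>n H\<^sub>n\<close> for first-order differential
  operators \<open>A\<^sub>m\<close> (\<open>G_step\<close>) and \<open>B\<^sub>m\<close> (\<open>H_step\<close>), and the claim is \<open>G\<^sub>n = T\<^sub>n H\<^sub>n\<close> with
  \<open>T\<^sub>m f = (m + (m-1) x) f + (x+x\<^sup>2) f'\<close> (\<open>H_to_G\<close>). It follows by induction from the operator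
  identity \<open>T\<^sub>m\<^sub>+\<^sub>1 \<circ> B\<^sub>m = A\<^sub>m \<circ> T\<^sub>m\<close>, which only uses the Leibniz rule together with
  \<open>m' = 0\<close> and \<open>x' = 1\<close>, so it is a formal identity in any ring with a derivation.
\<close>

definition G_step :: "'a::idom \<Rightarrow> 'a poly \<Rightarrow> 'a poly" where
  "G_step m f = [: 2 * m, m :] * f + [:1, 1:]^2 * pderiv f"

definition H_step :: "'a::idom \<Rightarrow> 'a poly \<Rightarrow> 'a poly" where
  "H_step m f = [: 2 * m - 1, m - 1 :] * f + [:1, 1:]^2 * pderiv f"

definition H_to_G :: "'a::idom \<Rightarrow> 'a poly \<Rightarrow> 'a poly" where
  "H_to_G m f = [: m, m - 1 :] * f + [:0, 1, 1:] * pderiv f"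

lemma G_Suc: "n \<ge> 1 \<Longrightarrow> G (Suc n) = G_step (int n) (G n)"
  by (cases n) (simp_all add: G_step_def)

lemma H_Suc: "n \<ge> 1 \<Longrightarrow> H (Suc n) = H_step (int n) (H n)"
  by (cases n) (simp_all add: H_step_def)

lemma intertwining_identity:
  fixes c x f :: "'a::idom poly"
  assumes "pderiv c = 0" and "pderiv x = 1"
  shows "(c + 1 + c * x) * ((2 * c - 1 + (c - 1) * x) * f + (1 + x)^2 * pderiv f)
           + (x + x^2) * pderiv ((2 * c - 1 + (c - 1) * x) * f + (1 + x)^2 * pderiv f)
       = (2 * c + c * x) * ((c + (c - 1) * x) * f + (x + x^2) * pderiv f)
           + (1 + x)^2 * pderiv ((c + (c - 1) * x) * f + (x + x^2) * pderiv f)"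
  using assms
  by (simp add: pderiv_mult pderiv_add pderiv_diff pderiv_power power2_eq_square)
     (simp add: algebra_simps)

lemma H_to_G_H_step: "H_to_G (m + 1) (H_step m f) = G_step m (H_to_G m f)"
proof -
  define X :: "'a poly" where "X = [:0, 1:]"
  define C where "C = [:m:]"
  have coeffs:
    "[:2 * m, m:] = 2 * C + C * X"
    "[:2 * m - 1, m - 1:] = 2 * C - 1 + (C - 1) * X"
    "[:m, m - 1:] = C + (C - 1) * X"
    "[:m + 1, m + 1 - 1:] = C + 1 + C * X"
    "[:1, 1:] = 1 + X"
    "[:0, 1, 1:] = X + X^2"
    by (simp_all add: C_def X_def numeral_poly one_pCons power2_eq_square)
  have "pderiv C = 0" "pderiv X = 1"
    by (simp_all add: C_def X_def pderiv_pCons)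
  from intertwining_identity[OF this, of f, folded coeffs] show ?thesis
    unfolding G_step_def H_step_def H_to_G_def .
qed

lemma G_eq_H_to_G: "n \<ge> 1 \<Longrightarrow> G n = H_to_G (int n) (H n)"
proof (induction n rule: nat_induct_at_least)
  case base
  show ?case by (simp add: H_to_G_def)
next
  case (Suc n)
  have "G (Suc n) = G_step (int n) (H_to_G (int n) (H n))"
    using Suc by (simp add: G_Suc)
  also have "\<dots> = H_to_G (int n + 1) (H_step (int n) (H n))"
    by (simp add: H_to_G_H_step)
  also have "\<dots> = H_to_G (int (Suc n)) (H (Suc n))"
    using Suc by (simp add: H_Suc add.commute)
  finally show ?case .
qed

theorem mainTheorem8:
  fixes n :: nat
  assumes "n \<ge> 1"
  shows "G n = [: int n, int n - 1 :] * H n + [:0, 1, 1:] * pderiv (H n)"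
  using G_eq_H_to_G[OF assms] by (simp add: H_to_G_def)

end
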